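(* Let $\epsilon_1,\epsilon_2>0$ and let $F$ be an SCF on $n$ voters and three alternatives such that: (i) $M^{a,b}(F)\le\epsilon_1$ for every pair of distinct alternatives $a,b$; (ii) $F$ is at least $\epsilon_2$-far from every dictatorship and from every anti-dictatorship; (iii) $\Pr_{x\in(L_3)^n}[F(x)=a]\ge\epsilon_2$ for every alternative $a$. Then there exists a GSWF $G$ on $n$ voters and three alternatives such that: (1) $G$ satisfies IIA; (2) $\mathrm{Dist}(G,TR_3)\ge \epsilon_2-3\sqrt{\epsilon_1}$; (3) $NT(G)\le 3\sqrt{\epsilon_1}$.
   Context: $L_m$ is the set of linear orders on $m$ alternatives; profiles $x\in(L_m)^n$ are uniform random. For alternatives $a\ne b$, $x^{a,b}\in\{0,1\}^n$ has $x^{a,b}_i=1$ iff voter $i$ ranks $a$ above $b$. An SCF is $F:(L_m)^n\to\{$alternatives$\}$. $M^{a,b}(F)=\Pr[F(x)=a,\ F(x')=b]$ with $x,x'$ uniform profiles subject to $x^{a,b}=x'^{a,b}$. The $i$-th dictatorship (anti-dictatorship) SCF outputs the top (bottom) alternative of $x_i$; $F$ is $\delta$-far from it if $\Pr_x[F(x)\ne$ that output$]\ge\delta$. A GSWF is $G:(L_m)^n\to\{0,1\}^{\binom m2}$, giving for each pair $a,b$ a bit $G^{a,b}(x)$ ($=1$ iff society prefers $a$ to $b$, with $G^{b,a}=1-G^{a,b}$). $G$ satisfies IIA if each $G^{a,b}(x)$ depends only on $x^{a,b}$. $NT(G)=\Pr_x[G(x)$ is non-transitive$]$. $TR_m$ is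 the set of GSWFs on $m$ alternatives satisfying IIA whose output is always transitive, and $\mathrm{Dist}(G,TR_m)=\min_{H\in TR_m}\Pr_x[G(x)\ne H(x)]$. *)

theory Defs
  imports Complex_Main "HOL-Library.FuncSet"
begin

text \<open>A linear order (ranking) of a voter is a
relation r on 'a with linear_order r; the pair (a,b) in r means that a is ranked
(weakly) above b, so for a different from b, (a,b) in r iff a is ranked above b.\<close>

definition lin_orders :: "('a \<times> 'a) set set" where
  "lin_orders = {r. linear_order r}"

definition profiles :: "nat \<Rightarrow> (nat \<Rightarrow> ('a \<times> 'a) set) set" where
  "profiles n = {0..<n} \<rightarrow>\<^sub>E lin_orders"

definition Pr :: "nat \<Rightarrow> ((nat \<Rightarrow> ('a \<times> 'a) set) \<Rightarrow> bool) \<Rightarrow> real" where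
  "Pr n Q = real (card {x \<in> profiles n. Q x}) / real (card (profiles n :: (nat \<Rightarrow> ('a \<times> 'a) set) set))"

definition agree_on :: "nat \<Rightarrow> 'a \<Rightarrow> 'a \<Rightarrow> (nat \<Rightarrow> ('a \<times> 'a) set) \<Rightarrow> (nat \<Rightarrow> ('a \<times> 'a) set) \<Rightarrow> bool" where
  "agree_on n a b x x' \<longleftrightarrow> (\<forall>i<n. ((a,b) \<in> x i \<longleftrightarrow> (a,b) \<in> x' i))"

definition M :: "nat \<Rightarrow> 'a \<Rightarrow> 'a \<Rightarrow> ((nat \<Rightarrow> ('a \<times> 'a) set) \<Rightarrow> 'a) \<Rightarrow> real" where
  "M n a b F =
     real (card {(x, x'). x \<in> profiles n \<and> x' \<in> profiles n \<and> agree_on n a b x x'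
                         \<and> F x = a \<and> F x' = b})
     / real (card {(x, x'). x \<in> profiles n \<and> x' \<in> profiles n \<and> agree_on n a b x x'})"

definition top_alt :: "('a \<times> 'a) set \<Rightarrow> 'a" where
  "top_alt r = (THE c. \<forall>d. (c, d) \<in> r)"

definition bottom_alt :: "('a \<times> 'a) set \<Rightarrow> 'a" where
  "bottom_alt r = (THE c. \<forall>d. (d, c) \<in> r)"

definition far_from_dict :: "nat \<Rightarrow> real \<Rightarrow> ((nat \<Rightarrow> ('a \<times> 'a) set) \<Rightarrow> 'a) \<Rightarrow> nat \<Rightarrow> bool" where
  "far_from_dict n \<delta> F i \<longleftrightarrow> Pr n (\<lambda>x. F x \<noteq> top_alt (x i)) \<ge> \<delta>"

definition far_from_antidict :: "nat \<Rightarrow> real \<Rightarrow> ((nat \<Rightarrow> ('a \<times> 'a) set) \<Rightarrow> 'a) \<Rightarrow> nat \<Rightarrow> bool" where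
  "far_from_antidict n \<delta> F i \<longleftrightarrow> Pr n (\<lambda>x. F x \<noteq> bottom_alt (x i)) \<ge> \<delta>"

text \<open>A GSWF: G x a b is the bit G^{a,b}(x) (society prefers a to b), for a \<noteq> b,
with G^{b,a} = 1 - G^{a,b}; the diagonal is normalised to False so that the output
G x is exactly determined by the bits on pairs of distinct alternatives.\<close>
definition is_gswf :: "nat \<Rightarrow> ((nat \<Rightarrow> ('a \<times> 'a) set) \<Rightarrow> 'a \<Rightarrow> 'a \<Rightarrow> bool) \<Rightarrow> bool" where
  "is_gswf n G \<longleftrightarrow> (\<forall>x \<in> profiles n. (\<forall>a. \<not> G x a a) \<and>
        (\<forall>a b. a \<noteq> b \<longrightarrow> (G x b a \<longleftrightarrow> \<not> G x a b)))"

definition IIA :: "nat \<Rightarrow> ((nat \<Rightarrow> ('a \<times> 'a) set) \<Rightarrow> 'a \<Rightarrow> 'a \<Rightarrow> bool) \<Rightarrow> bool" where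
  "IIA n G \<longleftrightarrow> (\<forall>a b. \<forall>x \<in> profiles n. \<forall>x' \<in> profiles n.
        agree_on n a b x x' \<longrightarrow> (G x a b \<longleftrightarrow> G x' a b))"

definition transitive_out :: "('a \<Rightarrow> 'a \<Rightarrow> bool) \<Rightarrow> bool" where
  "transitive_out g \<longleftrightarrow> (\<forall>a b c. g a b \<and> g b c \<longrightarrow> g a c)"

definition NT :: "nat \<Rightarrow> ((nat \<Rightarrow> ('a \<times> 'a) set) \<Rightarrow> 'a \<Rightarrow> 'a \<Rightarrow> bool) \<Rightarrow> real" where
  "NT n G = Pr n (\<lambda>x. \<not> transitive_out (G x))"

definition TR :: "nat \<Rightarrow> ((nat \<Rightarrow> ('a \<times> 'a) set) \<Rightarrow> 'a \<Rightarrow> 'a \<Rightarrow> bool) set" where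
  "TR n = {H. is_gswf n H \<and> IIA n H \<and> (\<forall>x \<in> profiles n. transitive_out (H x))}"

definition Dist :: "nat \<Rightarrow> ((nat \<Rightarrow> ('a \<times> 'a) set) \<Rightarrow> 'a \<Rightarrow> 'a \<Rightarrow> bool) \<Rightarrow> real" where
  "Dist n G = Inf ((\<lambda>H. Pr n (\<lambda>x. G x \<noteq> H x)) ` TR n)"

end

theory Submission
  imports Defs "HOL-Analysis.Convex" "HOL-Combinatorics.Transposition"
begin

text \<open>
  Given the SCF F we build the GSWF G that
  decides each pair {p,q} by conditional plurality: among all profiles sharing
  the bits x^{p,q} (the fibre of x), G prefers p to q if F selects p more often
  than q there (ties broken by a fixed ranking).

  (A) By double counting over fibres and Cauchy-Schwarz, F's choice from {p,q}
      loses the contest on {p,q} with probability at most sqrt(M^{p,q}(F)).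
  (B) Hence F x is the Condorcet winner of G x except with probability
      3 sqrt(eps1); a tournament on three alternatives with a winner is
      transitive, so NT(G) is at most 3 sqrt(eps1).
  (C) By Arrow's theorem for three alternatives, every transitive IIA GSWF H
      has a never-winning alternative or is a (anti-)dictatorship, so by the
      hypotheses on F, F x fails to be the winner of H x with probability at
      least eps2.
  (D) Comparing G with H gives Dist(G, TR_3) at least eps2 - 3 sqrt(eps1).
\<close>

type_synonym 'a profile = "nat \<Rightarrow> ('a \<times> 'a) set"

lemma linear_order_swap: "linear_order r \<Longrightarrow> p \<noteq> q \<Longrightarrow> (q, p) \<in> r \<longleftrightarrow> (p, q) \<notin> r"
  unfolding linear_order_on_def partial_order_on_def total_on_def antisym_def by blast

lemma linear_order_refl: "linear_order r \<Longrightarrow> (p, p) \<in> r"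
  unfolding linear_order_on_def partial_order_on_def preorder_on_def refl_on_def by blast

lemma linear_order_trans: "linear_order r \<Longrightarrow> (p, q) \<in> r \<Longrightarrow> (q, s) \<in> r \<Longrightarrow> (p, s) \<in> r"
  unfolding linear_order_on_def partial_order_on_def preorder_on_def trans_def by blast

lemma linear_order_antisym: "linear_order r \<Longrightarrow> (p, q) \<in> r \<Longrightarrow> (q, p) \<in> r \<Longrightarrow> p = q"
  unfolding linear_order_on_def partial_order_on_def antisym_def by blast

lemma linear_order_exists: "\<exists>r :: 'a rel. linear_order r"
  using well_ordering unfolding well_order_on_def by metis

lemma linear_order_inv_image:
  assumes f: "inj f" and r: "linear_order r"
  shows "linear_order (inv_image r f)"
proof -
  have "refl (inv_image r f)"
    using r unfolding linear_order_on_def partial_order_on_def preorder_on_def refl_on_def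
    by simp
  moreover have "trans (inv_image r f)"
    using r trans_inv_image unfolding linear_order_on_def partial_order_on_def preorder_on_def
    by blast
  moreover have "antisym (inv_image r f)"
    using r f unfolding linear_order_on_def partial_order_on_def antisym_def inv_image_def
    by (auto dest: injD)
  moreover have "total (inv_image r f)"
    using r f total_inv_image unfolding linear_order_on_def by blast
  ultimately show ?thesis
    unfolding linear_order_on_def partial_order_on_def preorder_on_def by simp
qed

lemma linear_order_nat_le: "linear_order {(i, j :: nat). i \<le> j}"
  unfolding linear_order_on_def partial_order_on_def preorder_on_def refl_on_def trans_def
    antisym_def total_on_def by auto

lemma linear_order_first:
  fixes r :: "('a::finite \<times> 'a) set"
  assumes r: "linear_order r"
  shows "\<exists>t. \<forall>d. (t, d) \<in> r"
proof -
  have "wf (r - Id)"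
    using r linear_order_on_well_order_on[of r UNIV] unfolding well_order_on_def by simp
  then obtain t where t: "\<And>d. (d, t) \<in> r - Id \<Longrightarrow> d \<notin> UNIV"
    using wfE_min[OF _ UNIV_I] by blast
  have "(t, d) \<in> r" for d
    using t[of d] linear_order_swap[OF r, of t d] linear_order_refl[OF r, of t] by auto
  then show ?thesis by blast
qed

lemma top_alt_first:
  fixes r :: "('a::finite \<times> 'a) set"
  assumes r: "linear_order r"
  shows "(top_alt r, d) \<in> r"
proof -
  obtain t where t: "\<forall>d. (t, d) \<in> r" using linear_order_first[OF r] by blast
  have "\<exists>!t. \<forall>d. (t, d) \<in> r"
    using t linear_order_antisym[OF r] by blast
  then show ?thesis unfolding top_alt_def by (rule theI'[THEN spec])
qed

lemma bottom_alt_last: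
  fixes r :: "('a::finite \<times> 'a) set"
  assumes r: "linear_order r"
  shows "(d, bottom_alt r) \<in> r"
proof -
  have "(top_alt (r\<inverse>), d) \<in> r\<inverse>" for d
    by (rule top_alt_first) (simp add: r)
  then have "\<exists>!t. \<forall>d. (d, t) \<in> r"
    using linear_order_antisym[OF r] by blast
  then show ?thesis unfolding bottom_alt_def by (rule theI'[THEN spec])
qed

lemma profiles_iff:
  "x \<in> profiles n \<longleftrightarrow> (\<forall>i<n. linear_order (x i)) \<and> (\<forall>i\<ge>n. x i = undefined)"
  unfolding profiles_def PiE_iff lin_orders_def extensional_def by auto

lemma profile_linear_order: "x \<in> profiles n \<Longrightarrow> i < n \<Longrightarrow> linear_order (x i)"
  unfolding profiles_iff by blast

lemma finite_profiles: "finite (profiles n :: 'a::finite profile set)"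
  unfolding profiles_def by (rule finite_PiE) auto

lemma profiles_nonempty: "profiles n \<noteq> {}"
proof -
  obtain r :: "'a rel" where "linear_order r" using linear_order_exists by blast
  then have "(\<lambda>i. if i < n then r else undefined) \<in> profiles n" unfolding profiles_iff by auto
  then show ?thesis by blast
qed

lemma Pr_mono:
  fixes Q R :: "'a::finite profile \<Rightarrow> bool"
  assumes "\<And>x. x \<in> profiles n \<Longrightarrow> Q x \<Longrightarrow> R x"
  shows "Pr n Q \<le> Pr n R"
proof -
  have "card {x \<in> profiles n. Q x} \<le> card {x \<in> profiles n. R x}"
    by (rule card_mono) (use assms finite_profiles[of n] in auto)
  then show ?thesis unfolding Pr_def by (simp add: divide_right_mono)
qed

lemma Pr_union:
  fixes Q R :: "'a::finite profile \<Rightarrow> bool"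
  shows "Pr n (\<lambda>x. Q x \<or> R x) \<le> Pr n Q + Pr n R"
proof -
  have "{x \<in> profiles n. Q x \<or> R x} = {x \<in> profiles n. Q x} \<union> {x \<in> profiles n. R x}" by auto
  then have "card {x \<in> profiles n. Q x \<or> R x} \<le> card {x \<in> profiles n. Q x} + card {x \<in> profiles n. R x}"
    by (simp add: card_Un_le)
  then show ?thesis unfolding Pr_def by (simp add: divide_right_mono flip: add_divide_distrib)
qed

definition fibre :: "nat \<Rightarrow> 'a \<Rightarrow> 'a \<Rightarrow> 'a profile \<Rightarrow> 'a profile set" where
  "fibre n p q x = {y \<in> profiles n. agree_on n p q x y}"

lemma finite_fibre: "finite (fibre n p q (x :: 'a::finite profile))"
  unfolding fibre_def using finite_profiles by (rule finite_subset[rotated]) blast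

lemma fibre_self: "x \<in> profiles n \<Longrightarrow> x \<in> fibre n p q x"
  unfolding fibre_def agree_on_def by simp

lemma fibre_agree: "agree_on n p q x x' \<Longrightarrow> fibre n p q x = fibre n p q x'"
  unfolding fibre_def agree_on_def by auto

lemma fibre_flip:
  assumes x: "x \<in> profiles n" and pq: "p \<noteq> q"
  shows "fibre n q p x = fibre n p q x"
proof -
  have "agree_on n q p x y \<longleftrightarrow> agree_on n p q x y" if y: "y \<in> profiles n" for y
    using linear_order_swap[OF profile_linear_order[OF x] pq]
      linear_order_swap[OF profile_linear_order[OF y] pq]
    unfolding agree_on_def by simp
  then show ?thesis unfolding fibre_def by blast
qed

text \<open>Exchanging the positions of p and q in a ranking flips the bit (p,q) and
  nothing else relevant; it is the bijection that makes all fibres equally large.\<close>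
definition exchange :: "'a \<Rightarrow> 'a \<Rightarrow> ('a \<times> 'a) set \<Rightarrow> ('a \<times> 'a) set" where
  "exchange p q r = inv_image r (transpose p q)"

lemma exchange_exchange [simp]: "exchange p q (exchange p q r) = r"
  unfolding exchange_def inv_image_def by simp

lemma linear_order_exchange: "linear_order r \<Longrightarrow> linear_order (exchange p q r)"
  unfolding exchange_def by (rule linear_order_inv_image[OF inj_transpose])

lemma exchange_bit: "(p, q) \<in> exchange p q r \<longleftrightarrow> (q, p) \<in> r"
  unfolding exchange_def by simp

lemma card_fibre_le:
  fixes x x' :: "'a::finite profile"
  assumes x: "x \<in> profiles n" and x': "x' \<in> profiles n" and pq: "p \<noteq> q"
  shows "card (fibre n p q x) \<le> card (fibre n p q x')"
proof -
  define D where "D = {i. i < n \<and> ((p, q) \<in> x i \<longleftrightarrow> (p, q) \<notin> x' i)}"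
  define \<psi> where "\<psi> y i = (if i \<in> D then exchange p q (y i) else y i)" for y :: "'a profile" and i
  have inj: "inj \<psi>"
  proof (rule injI)
    fix y z assume "\<psi> y = \<psi> z"
    then have "y i = z i" for i
      unfolding \<psi>_def by (metis exchange_exchange)
    then show "y = z" by blast
  qed
  have maps: "\<psi> y \<in> fibre n p q x'" if y: "y \<in> fibre n p q x" for y
  proof -
    have yP: "y \<in> profiles n" and ag: "agree_on n p q x y" using y unfolding fibre_def by auto
    have "\<psi> y \<in> profiles n"
      using yP unfolding \<psi>_def profiles_iff D_def by (auto intro: linear_order_exchange)
    moreover have "(p, q) \<in> x' i \<longleftrightarrow> (p, q) \<in> \<psi> y i" if i: "i < n" for i
      using ag i linear_order_swap[OF profile_linear_order[OF yP i] pq]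
      unfolding agree_on_def \<psi>_def D_def by (auto simp: exchange_bit)
    ultimately show ?thesis unfolding fibre_def agree_on_def by blast
  qed
  show ?thesis
    using maps card_inj_on_le[OF inj_on_subset[OF inj] _ finite_fibre] by blast
qed

lemma card_fibre_eq:
  fixes x x' :: "'a::finite profile"
  assumes "x \<in> profiles n" "x' \<in> profiles n" "p \<noteq> q"
  shows "card (fibre n p q x) = card (fibre n p q x')"
  using card_fibre_le[OF assms] card_fibre_le[OF assms(2,1,3)] by simp

text \<open>Double counting: summing over the fibre of every profile counts every
  profile once per element of its own fibre.\<close>
lemma sum_over_fibres:
  fixes h :: "'a::finite profile \<Rightarrow> real"
  assumes s: "\<And>x. x \<in> profiles n \<Longrightarrow> card (fibre n p q x) = s"
  shows "(\<Sum>x\<in>profiles n. \<Sum>y\<in>fibre n p q x. h y) = real s * (\<Sum>y\<in>profiles n. h y)"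
proof -
  have fin: "finite (profiles n :: 'a profile set)" by (rule finite_profiles)
  have "(\<Sum>x\<in>profiles n. \<Sum>y\<in>fibre n p q x. h y)
      = (\<Sum>x\<in>profiles n. \<Sum>y\<in>profiles n. if agree_on n p q x y then h y else 0)"
    unfolding fibre_def by (simp add: sum.inter_filter[OF fin])
  also have "\<dots> = (\<Sum>y\<in>profiles n. \<Sum>x\<in>profiles n. if agree_on n p q y x then h y else 0)"
    by (subst sum.swap) (simp add: agree_on_def eq_commute)
  also have "\<dots> = (\<Sum>y\<in>profiles n. h y * real (card (fibre n p q y)))"
    unfolding fibre_def by (simp add: sum.inter_filter[OF fin, symmetric] mult.commute)
  also have "\<dots> = real s * (\<Sum>y\<in>profiles n. h y)"
    using s by (simp add: sum_distrib_left mult.commute)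
  finally show ?thesis .
qed

definition fibre_count :: "nat \<Rightarrow> ('a profile \<Rightarrow> 'a) \<Rightarrow> 'a \<Rightarrow> 'a \<Rightarrow> 'a profile \<Rightarrow> 'a \<Rightarrow> nat" where
  "fibre_count n F p q x r = card {y \<in> fibre n p q x. F y = r}"

definition cond_plurality ::
  "'a rel \<Rightarrow> nat \<Rightarrow> ('a profile \<Rightarrow> 'a) \<Rightarrow> 'a profile \<Rightarrow> 'a \<Rightarrow> 'a \<Rightarrow> bool" where
  "cond_plurality t n F x p q \<longleftrightarrow> p \<noteq> q \<and>
     (fibre_count n F p q x q < fibre_count n F p q x p \<or>
      fibre_count n F p q x p = fibre_count n F p q x q \<and> (p, q) \<in> t)"

lemma fibre_count_agree:
  "agree_on n p q x x' \<Longrightarrow> fibre_count n F p q x r = fibre_count n F p q x' r"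
  unfolding fibre_count_def by (simp add: fibre_agree)

lemma fibre_count_flip:
  "x \<in> profiles n \<Longrightarrow> p \<noteq> q \<Longrightarrow> fibre_count n F q p x r = fibre_count n F p q x r"
  unfolding fibre_count_def by (simp add: fibre_flip)

lemma cond_plurality_agree:
  "agree_on n p q x x' \<Longrightarrow> cond_plurality t n F x p q = cond_plurality t n F x' p q"
  unfolding cond_plurality_def by (simp add: fibre_count_agree[of n p q x x'])

lemma cond_plurality_antisym:
  assumes t: "linear_order t" and x: "x \<in> profiles n" and pq: "p \<noteq> q"
  shows "cond_plurality t n F x q p \<longleftrightarrow> \<not> cond_plurality t n F x p q"
  using pq linear_order_swap[OF t pq] fibre_count_flip[OF x pq]
  unfolding cond_plurality_def by auto

lemma cond_plurality_irrefl: "\<not> cond_plurality t n F x p p"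
  unfolding cond_plurality_def by simp

lemma cond_plurality_gswf: "linear_order t \<Longrightarrow> is_gswf n (cond_plurality t n F)"
  unfolding is_gswf_def using cond_plurality_irrefl cond_plurality_antisym by metis

lemma cond_plurality_IIA: "IIA n (cond_plurality t n F)"
  unfolding IIA_def using cond_plurality_agree by metis

lemma cond_plurality_loser_count:
  assumes "p \<noteq> q"
  shows "(if cond_plurality t n F x p q then fibre_count n F p q x q else fibre_count n F p q x p)
       = min (fibre_count n F p q x p) (fibre_count n F p q x q)"
  using assms unfolding cond_plurality_def by auto

lemma sum_of_bool_fibre:
  fixes x :: "'a::finite profile"
  shows "(\<Sum>y\<in>fibre n p q x. of_bool (F y = r) * c) = real (fibre_count n F p q x r) * c"
  using finite_fibre[of n p q x] unfolding fibre_count_def by (simp add: Int_def)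

lemma min_square_le_mult:
  fixes u v :: real
  assumes "0 \<le> u" "0 \<le> v"
  shows "(min u v)\<^sup>2 \<le> u * v"
  using assms mult_left_mono[of u v u] mult_right_mono[of v u v]
  by (cases "u \<le> v") (auto simp: power2_eq_square min_def)

context
  fixes n :: nat and F :: "'a::finite profile \<Rightarrow> 'a" and t :: "'a rel" and p q :: 'a and s :: nat
  assumes t: "linear_order t" and pq: "p \<noteq> q"
    and s: "\<And>x. x \<in> profiles n \<Longrightarrow> card (fibre n p q x) = s"
begin

definition pair_loss :: "'a profile \<Rightarrow> real" where
  "pair_loss y = of_bool (F y = p \<and> \<not> cond_plurality t n F y p q)
               + of_bool (F y = q \<and> \<not> cond_plurality t n F y q p)"

text \<open>On a fibre the outcome of the contest is fixed, so the losses add up to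
  the smaller of the two counts.\<close>
lemma fibre_pair_loss:
  assumes x: "x \<in> profiles n"
  shows "(\<Sum>y\<in>fibre n p q x. pair_loss y)
       = min (real (fibre_count n F p q x p)) (real (fibre_count n F p q x q))"
proof -
  let ?G = "cond_plurality t n F x p q"
  have "pair_loss y = of_bool (F y = p) * of_bool (\<not> ?G) + of_bool (F y = q) * of_bool ?G"
    if y: "y \<in> fibre n p q x" for y
  proof -
    have ag: "agree_on n p q x y" and yP: "y \<in> profiles n" using y unfolding fibre_def by auto
    have "cond_plurality t n F y p q = ?G" using cond_plurality_agree[OF ag] by simp
    moreover have "cond_plurality t n F y q p = (\<not> ?G)"
      using cond_plurality_antisym[OF t yP pq] calculation by simp
    ultimately show ?thesis unfolding pair_loss_def by simp
  qed
  then have "(\<Sum>y\<in>fibre n p q x. pair_loss y)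
      = real (fibre_count n F p q x p) * of_bool (\<not> ?G) + real (fibre_count n F p q x q) * of_bool ?G"
    by (simp add: sum.distrib sum_of_bool_fibre)
  also have "\<dots> = min (real (fibre_count n F p q x p)) (real (fibre_count n F p q x q))"
    using cond_plurality_loser_count[OF pq, of t n F x] by (auto split: if_splits)
  finally show ?thesis .
qed

lemma Pr_pair_loss:
  "Pr n (\<lambda>x. F x = p \<and> \<not> cond_plurality t n F x p q) + Pr n (\<lambda>x. F x = q \<and> \<not> cond_plurality t n F x q p)
     = (\<Sum>y\<in>profiles n. pair_loss y) / real (card (profiles n :: 'a profile set))"
  by (simp add: Pr_def pair_loss_def sum.distrib Int_def add_divide_distrib finite_profiles)

lemma total_pair_loss:
  "real s * (\<Sum>y\<in>profiles n. pair_loss y)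
     = (\<Sum>x\<in>profiles n. min (real (fibre_count n F p q x p)) (real (fibre_count n F p q x q)))"
  using sum_over_fibres[OF s, of pair_loss] fibre_pair_loss by simp

text \<open>The denominator of M: every profile is paired with its fibre.\<close>
lemma card_agreeing_pairs:
  "card {(x, x'). x \<in> profiles n \<and> x' \<in> profiles n \<and> agree_on n p q x x'}
     = card (profiles n :: 'a profile set) * s"
proof -
  have "{(x, x'). x \<in> profiles n \<and> x' \<in> profiles n \<and> agree_on n p q x x'}
      = Sigma (profiles n) (fibre n p q)"
    unfolding fibre_def by auto
  also have "card \<dots> = (\<Sum>x\<in>profiles n. card (fibre n p q x))"
    by (simp add: finite_profiles finite_fibre)
  also have "\<dots> = card (profiles n :: 'a profile set) * s"
    using s by simp
  finally show ?thesis .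
qed

text \<open>The numerator of M counted through fibres: a pair (x, x') with F x = p
  and F x' = q is a p-vote and a q-vote inside one fibre.\<close>
lemma card_agreeing_pq_pairs:
  "real s * real (card {(x, x'). x \<in> profiles n \<and> x' \<in> profiles n \<and> agree_on n p q x x'
                              \<and> F x = p \<and> F x' = q})
     = (\<Sum>x\<in>profiles n. real (fibre_count n F p q x p) * real (fibre_count n F p q x q))"
proof -
  let ?B = "\<lambda>x. real (fibre_count n F p q x q)"
  have "{(x, x'). x \<in> profiles n \<and> x' \<in> profiles n \<and> agree_on n p q x x' \<and> F x = p \<and> F x' = q}
      = Sigma {x \<in> profiles n. F x = p} (\<lambda>x. {y \<in> fibre n p q x. F y = q})"
    unfolding fibre_def by auto
  then have "real (card {(x, x'). x \<in> profiles n \<and> x' \<in> profiles n \<and> agree_on n p q x x'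
                              \<and> F x = p \<and> F x' = q})
      = (\<Sum>x\<in>profiles n. of_bool (F x = p) * ?B x)"
    by (simp add: finite_profiles finite_fibre fibre_count_def Int_def)
  moreover have "(\<Sum>y\<in>fibre n p q x. of_bool (F y = p) * ?B y) = real (fibre_count n F p q x p) * ?B x"
    for x
  proof -
    have "?B y = ?B x" if "y \<in> fibre n p q x" for y
      using that fibre_count_agree[of n p q x y] unfolding fibre_def by simp
    then show ?thesis by (simp add: sum_of_bool_fibre cong: sum.cong)
  qed
  ultimately show ?thesis
    using sum_over_fibres[OF s, of "\<lambda>y. of_bool (F y = p) * ?B y"] by simp
qed

lemma fibre_size_pos: "0 < s"
proof -
  obtain x :: "'a profile" where x: "x \<in> profiles n" using profiles_nonempty by blast
  then have "0 < card (fibre n p q x)"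
    using fibre_self[OF x, of p q] finite_fibre[of n p q x] card_gt_0_iff by blast
  with s[OF x] show ?thesis by simp
qed

lemma M_fibre_formula:
  "M n p q F = (\<Sum>x\<in>profiles n. real (fibre_count n F p q x p) * real (fibre_count n F p q x q))
              / (real s ^ 2 * real (card (profiles n :: 'a profile set)))"
proof -
  let ?S = "\<Sum>x\<in>profiles n. real (fibre_count n F p q x p) * real (fibre_count n F p q x q)"
  have "real (card {(x, x'). x \<in> profiles n \<and> x' \<in> profiles n \<and> agree_on n p q x x'
                              \<and> F x = p \<and> F x' = q}) = ?S / real s"
    using card_agreeing_pq_pairs fibre_size_pos by (simp add: eq_divide_eq mult.commute)
  then show ?thesis
    unfolding M_def card_agreeing_pairs by (simp add: power2_eq_square)
qed

text \<open>By Cauchy--Schwarz, the sum of minima of the counts is controlled by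
  the sum of their products, that is by M^{p,q}(F).\<close>
lemma pair_loss_le_sqrt_M:
  "Pr n (\<lambda>x. F x = p \<and> \<not> cond_plurality t n F x p q) + Pr n (\<lambda>x. F x = q \<and> \<not> cond_plurality t n F x q p)
     \<le> sqrt (M n p q F)"
proof -
  define N where "N = real (card (profiles n :: 'a profile set))"
  define L where "L = (\<Sum>y\<in>profiles n. pair_loss y)"
  define A where "A x = real (fibre_count n F p q x p)" for x
  define B where "B x = real (fibre_count n F p q x q)" for x
  have N: "0 < N" unfolding N_def by (simp add: card_gt_0_iff finite_profiles profiles_nonempty)
  have "(real s * L)\<^sup>2 \<le> (\<Sum>x\<in>profiles n. (min (A x) (B x))\<^sup>2) * N"
    unfolding L_def total_pair_loss A_def B_def N_def by (rule sum_squared_le_sum_of_squares)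
  also have "\<dots> \<le> (\<Sum>x\<in>profiles n. A x * B x) * N"
    using N by (intro mult_right_mono sum_mono min_square_le_mult) (auto simp: A_def B_def)
  also have "\<dots> = M n p q F * (real s)\<^sup>2 * N\<^sup>2"
    using fibre_size_pos N unfolding M_fibre_formula A_def B_def N_def
    by (simp add: field_simps power2_eq_square)
  finally have "(L / N)\<^sup>2 \<le> M n p q F"
    using fibre_size_pos N by (simp add: power_mult_distrib power_divide field_simps)
  then show ?thesis
    unfolding Pr_pair_loss L_def N_def by (rule real_le_rsqrt)
qed

end

lemma cond_plurality_pair_loss:
  fixes F :: "'a::finite profile \<Rightarrow> 'a"
  assumes t: "linear_order t" and pq: "p \<noteq> q"
  shows "Pr n (\<lambda>x. F x = p \<and> \<not> cond_plurality t n F x p q)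
           + Pr n (\<lambda>x. F x = q \<and> \<not> cond_plurality t n F x q p) \<le> sqrt (M n p q F)"
proof -
  obtain x0 :: "'a profile" where x0: "x0 \<in> profiles n" using profiles_nonempty by blast
  have "card (fibre n p q x) = card (fibre n p q x0)" if "x \<in> profiles n" for x
    using card_fibre_eq[OF that x0 pq] .
  then show ?thesis by (rule pair_loss_le_sqrt_M[OF t pq])
qed

definition winner :: "('a \<Rightarrow> 'a \<Rightarrow> bool) \<Rightarrow> 'a \<Rightarrow> bool" where
  "winner g w \<longleftrightarrow> (\<forall>q. q \<noteq> w \<longrightarrow> g w q)"

lemma winner_unique:
  assumes "is_gswf n G" "x \<in> profiles n" "winner (G x) w" "winner (G x) w'"
  shows "w = w'"
proof (rule ccontr)
  assume ne: "w \<noteq> w'"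
  then have "G x w w'" "G x w' w" using assms(3,4) unfolding winner_def by auto
  moreover have "G x w' w \<longleftrightarrow> \<not> G x w w'" using assms(1,2) ne unfolding is_gswf_def by blast
  ultimately show False by simp
qed

text \<open>The constant GSWF following a fixed ranking shows that TR is nonempty.\<close>
lemma TR_nonempty: "TR n \<noteq> {}"
proof -
  obtain t :: "'a rel" where t: "linear_order t" using linear_order_exists by blast
  define H :: "'a profile \<Rightarrow> 'a \<Rightarrow> 'a \<Rightarrow> bool" where "H x p q \<longleftrightarrow> p \<noteq> q \<and> (p, q) \<in> t" for x p q
  have "\<not> H x p p" for x p unfolding H_def by simp
  moreover have "H x q p \<longleftrightarrow> \<not> H x p q" if "p \<noteq> q" for x p q
    unfolding H_def using that linear_order_swap[OF t that] by auto
  ultimately have "is_gswf n H" unfolding is_gswf_def by blast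
  moreover have "IIA n H" unfolding IIA_def H_def by simp
  moreover have "transitive_out (H x)" for x
    unfolding transitive_out_def
  proof (intro allI impI)
    fix p q r assume "H x p q \<and> H x q r"
    then have pq: "(p, q) \<in> t" "p \<noteq> q" and qr: "(q, r) \<in> t" unfolding H_def by auto
    have "(p, r) \<in> t" by (rule linear_order_trans[OF t pq(1) qr])
    moreover have "p \<noteq> r" using linear_order_antisym[OF t pq(1)] qr pq(2) by blast
    ultimately show "H x p r" unfolding H_def by simp
  qed
  ultimately have "H \<in> TR n" unfolding TR_def by blast
  then show ?thesis by blast
qed

lemma Dist_lower_bound:
  fixes G :: "'a::finite profile \<Rightarrow> 'a \<Rightarrow> 'a \<Rightarrow> bool" and F :: "'a profile \<Rightarrow> 'a"
  assumes far: "\<And>H. H \<in> TR n \<Longrightarrow> \<delta> \<le> Pr n (\<lambda>x. \<not> winner (H x) (F x))"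
  shows "\<delta> - Pr n (\<lambda>x. \<not> winner (G x) (F x)) \<le> Dist n G"
  unfolding Dist_def
proof (rule cInf_greatest)
  show "(\<lambda>H. Pr n (\<lambda>x. G x \<noteq> H x)) ` TR n \<noteq> {}" using TR_nonempty by blast
next
  fix r assume "r \<in> (\<lambda>H. Pr n (\<lambda>x. G x \<noteq> H x)) ` TR n"
  then obtain H where H: "H \<in> TR n" and r: "r = Pr n (\<lambda>x. G x \<noteq> H x)" by blast
  have "Pr n (\<lambda>x. \<not> winner (H x) (F x)) \<le> Pr n (\<lambda>x. G x \<noteq> H x \<or> \<not> winner (G x) (F x))"
    by (rule Pr_mono) auto
  also have "\<dots> \<le> r + Pr n (\<lambda>x. \<not> winner (G x) (F x))"
    unfolding r by (rule Pr_union)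
  finally show "\<delta> - Pr n (\<lambda>x. \<not> winner (G x) (F x)) \<le> r" using far[OF H] by linarith
qed

locale three_alternatives =
  fixes a b c :: "'a::finite"
  assumes ab: "a \<noteq> b" and bc: "b \<noteq> c" and ac: "a \<noteq> c"
    and exhaust: "\<And>x. x = a \<or> x = b \<or> x = c"
begin

lemma transitive_if_winner:
  fixes g :: "'a \<Rightarrow> 'a \<Rightarrow> bool"
  assumes irrefl: "\<And>u. \<not> g u u" and anti: "\<And>u v. u \<noteq> v \<Longrightarrow> g v u \<longleftrightarrow> \<not> g u v"
    and w: "winner g w"
  shows "transitive_out g"
  unfolding transitive_out_def
proof (intro allI impI)
  fix u v z assume uvz: "g u v \<and> g v z"
  then have uv: "u \<noteq> v" and vz: "v \<noteq> z" using irrefl by auto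
  show "g u z"
  proof (cases "u = z")
    case True
    then show ?thesis using uvz anti[OF uv] by simp
  next
    case uz: False
    have "w = u \<or> w = v \<or> w = z"
      using exhaust[of w] exhaust[of u] exhaust[of v] exhaust[of z] uv vz uz ab bc ac
      by (elim disjE) simp_all
    then show ?thesis
    proof (elim disjE)
      assume "w = u" then show ?thesis using w uz unfolding winner_def by simp
    next
      assume "w = v" then have "g v u" using w uv unfolding winner_def by simp
      then show ?thesis using uvz anti[OF uv] by simp
    next
      assume "w = z" then have "g z v" using w vz unfolding winner_def by simp
      then show ?thesis using uvz anti[OF vz] by simp
    qed
  qed
qed

text \<open>Whenever F x is the winner of G x, the output of G is transitive.\<close>
lemma NT_le_Pr_not_winner:
  fixes F :: "'a profile \<Rightarrow> 'a"
  assumes G: "is_gswf n G"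
  shows "NT n G \<le> Pr n (\<lambda>x. \<not> winner (G x) (F x))"
  unfolding NT_def
proof (rule Pr_mono)
  fix x assume x: "x \<in> profiles n" and nt: "\<not> transitive_out (G x)"
  have "\<And>u. \<not> G x u u" "\<And>u v. u \<noteq> v \<Longrightarrow> G x v u \<longleftrightarrow> \<not> G x u v"
    using G x unfolding is_gswf_def by blast+
  then show "\<not> winner (G x) (F x)" using transitive_if_winner[of "G x" "F x"] nt by argo
qed

lemma not_winner_cases:
  assumes "\<not> winner g (F x)"
  shows "(F x = a \<and> \<not> g a b \<or> F x = b \<and> \<not> g b a)
       \<or> (F x = a \<and> \<not> g a c \<or> F x = c \<and> \<not> g c a)
       \<or> (F x = b \<and> \<not> g b c \<or> F x = c \<and> \<not> g c b)"
proof -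
  obtain q where q: "q \<noteq> F x" "\<not> g (F x) q" using assms unfolding winner_def by blast
  show ?thesis using exhaust[of "F x"] exhaust[of q] q by (elim disjE) simp_all
qed

lemma Pr_cond_plurality_not_winner:
  fixes F :: "'a profile \<Rightarrow> 'a"
  assumes t: "linear_order t" and M: "\<And>p q. p \<noteq> q \<Longrightarrow> M n p q F \<le> \<epsilon>"
  shows "Pr n (\<lambda>x. \<not> winner (cond_plurality t n F x) (F x)) \<le> 3 * sqrt \<epsilon>"
proof -
  let ?G = "cond_plurality t n F"
  let ?E = "\<lambda>p q x. F x = p \<and> \<not> ?G x p q \<or> F x = q \<and> \<not> ?G x q p"
  have pair: "Pr n (?E p q) \<le> sqrt \<epsilon>" if "p \<noteq> q" for p q
  proof -
    have "Pr n (?E p q) \<le> sqrt (M n p q F)"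
      using Pr_union[of n "\<lambda>x. F x = p \<and> \<not> ?G x p q" "\<lambda>x. F x = q \<and> \<not> ?G x q p"] cond_plurality_pair_loss[OF t that, of n F]
      by linarith
    then show ?thesis using M[OF that] by (meson order_trans real_sqrt_le_iff)
  qed
  have "Pr n (\<lambda>x. \<not> winner (?G x) (F x)) \<le> Pr n (\<lambda>x. ?E a b x \<or> ?E a c x \<or> ?E b c x)"
    by (rule Pr_mono) (rule not_winner_cases)
  also have "\<dots> \<le> Pr n (?E a b) + (Pr n (?E a c) + Pr n (?E b c))"
    using Pr_union[of n "?E a b" "\<lambda>x. ?E a c x \<or> ?E b c x"] Pr_union[of n "?E a c" "?E b c"]
    by linarith
  also have "\<dots> \<le> 3 * sqrt \<epsilon>"
    using pair[OF ab] pair[OF ac] pair[OF bc] by linarith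
  finally show ?thesis .
qed

text \<open>A ranking of a, b, c is determined by the three cyclic bits
  (a,b), (b,c), (c,a), which may take any values except all equal.
  The ranking realising the bits u, v, w is given by positions.\<close>
definition position3 :: "bool \<Rightarrow> bool \<Rightarrow> bool \<Rightarrow> 'a \<Rightarrow> nat" where
  "position3 u v w z = (if z = a then of_bool (\<not> u) + of_bool w
     else if z = b then of_bool (\<not> v) + of_bool u
     else of_bool (\<not> w) + of_bool v)"

definition ranking3 :: "bool \<Rightarrow> bool \<Rightarrow> bool \<Rightarrow> ('a \<times> 'a) set" where
  "ranking3 u v w = inv_image {(i, j). i \<le> j} (position3 u v w)"

lemma linear_order_ranking3:
  assumes "\<not> (u = v \<and> v = w)"
  shows "linear_order (ranking3 u v w)"
proof -
  have "inj (position3 u v w)"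
  proof (rule injI)
    fix y z assume "position3 u v w y = position3 u v w z"
    then show "y = z"
      using exhaust[of y] exhaust[of z] assms ab bc ac
      by (cases u; cases v; cases w) (auto simp: position3_def)
  qed
  then show ?thesis unfolding ranking3_def by (rule linear_order_inv_image[OF _ linear_order_nat_le])
qed

lemma ranking3_bits:
  assumes "\<not> (u = v \<and> v = w)"
  shows "(a, b) \<in> ranking3 u v w \<longleftrightarrow> u" "(b, c) \<in> ranking3 u v w \<longleftrightarrow> v"
    "(c, a) \<in> ranking3 u v w \<longleftrightarrow> w"
  using assms ab bc ac by (cases u; cases v; cases w; simp add: ranking3_def position3_def)+

end

text \<open>Arrow's theorem for three alternatives, in the form needed here: a
  transitive IIA GSWF H on three alternatives either has an alternative that
  never wins, or is a dictatorship, or an anti-dictatorship.\<close>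
locale transitive_iia = three_alternatives a b c for a b c :: "'a::finite" +
  fixes n :: nat and H :: "'a profile \<Rightarrow> 'a \<Rightarrow> 'a \<Rightarrow> bool"
  assumes H_TR: "H \<in> TR n"
begin

lemma H_anti: "x \<in> profiles n \<Longrightarrow> p \<noteq> q \<Longrightarrow> H x q p \<longleftrightarrow> \<not> H x p q"
  using H_TR unfolding TR_def is_gswf_def by blast

lemma H_agree:
  "x \<in> profiles n \<Longrightarrow> x' \<in> profiles n \<Longrightarrow> agree_on n p q x x' \<Longrightarrow> H x p q = H x' p q"
  using H_TR unfolding TR_def IIA_def by blast

lemma H_trans: "x \<in> profiles n \<Longrightarrow> H x p q \<Longrightarrow> H x q r \<Longrightarrow> H x p r"
  using H_TR unfolding TR_def transitive_out_def by blast

text \<open>Bit vectors U, V, W (one bit per voter) are realised as the profile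
  with cyclic bits U i, V i, W i, provided no voter has three equal bits.\<close>
definition nae :: "(nat \<Rightarrow> bool) \<Rightarrow> (nat \<Rightarrow> bool) \<Rightarrow> (nat \<Rightarrow> bool) \<Rightarrow> bool" where
  "nae U V W \<longleftrightarrow> (\<forall>i<n. \<not> (U i = V i \<and> V i = W i))"

definition profile3 :: "(nat \<Rightarrow> bool) \<Rightarrow> (nat \<Rightarrow> bool) \<Rightarrow> (nat \<Rightarrow> bool) \<Rightarrow> 'a profile" where
  "profile3 U V W = (\<lambda>i. if i < n then ranking3 (U i) (V i) (W i) else undefined)"

definition neg :: "(nat \<Rightarrow> bool) \<Rightarrow> nat \<Rightarrow> bool" where
  "neg U = (\<lambda>i. \<not> U i)"

lemma neg_neg [simp]: "neg (neg U) = U"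
  unfolding neg_def by simp

lemma nae_neg: "nae U (neg U) W" "nae U V (neg V)" "nae (neg W) V W"
  unfolding nae_def neg_def by auto

lemma profile3_mem: "nae U V W \<Longrightarrow> profile3 U V W \<in> profiles n"
  unfolding profiles_iff profile3_def nae_def using linear_order_ranking3 by auto

lemma profile3_bits:
  assumes "nae U V W" "i < n"
  shows "(a, b) \<in> profile3 U V W i \<longleftrightarrow> U i" "(b, c) \<in> profile3 U V W i \<longleftrightarrow> V i"
    "(c, a) \<in> profile3 U V W i \<longleftrightarrow> W i"
  using assms ranking3_bits[of "U i" "V i" "W i"] unfolding profile3_def nae_def by auto

text \<open>By IIA, the decision of H on each cyclic pair is a Boolean function of
  the voters' bits on that pair.\<close>
definition dec_ab :: "(nat \<Rightarrow> bool) \<Rightarrow> bool" where "dec_ab U = H (profile3 U (neg U) U) a b"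
definition dec_bc :: "(nat \<Rightarrow> bool) \<Rightarrow> bool" where "dec_bc V = H (profile3 V V (neg V)) b c"
definition dec_ca :: "(nat \<Rightarrow> bool) \<Rightarrow> bool" where "dec_ca W = H (profile3 (neg W) W W) c a"

lemma H_dec:
  assumes x: "x \<in> profiles n"
  shows "H x a b = dec_ab (\<lambda>i. (a, b) \<in> x i)" "H x b c = dec_bc (\<lambda>i. (b, c) \<in> x i)"
    "H x c a = dec_ca (\<lambda>i. (c, a) \<in> x i)"
  unfolding dec_ab_def dec_bc_def dec_ca_def
  by (intro H_agree[OF x profile3_mem]; simp add: nae_neg agree_on_def profile3_bits)+

lemma H_profile3:
  assumes N: "nae U V W"
  shows "H (profile3 U V W) a b = dec_ab U" "H (profile3 U V W) b c = dec_bc V"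
    "H (profile3 U V W) c a = dec_ca W"
  unfolding dec_ab_def dec_bc_def dec_ca_def
  by (intro H_agree[OF profile3_mem[OF N] profile3_mem]; simp add: N nae_neg agree_on_def profile3_bits)+

lemma dec_ab_local:
  assumes "\<And>i. i < n \<Longrightarrow> U i = U' i"
  shows "dec_ab U = dec_ab U'"
proof -
  have "profile3 U (neg U) U = profile3 U' (neg U') U'"
    unfolding profile3_def neg_def using assms by fastforce
  then show ?thesis unfolding dec_ab_def by simp
qed

text \<open>Transitivity forbids the three cyclic decisions to be equal on any
  realisable profile.\<close>
lemma no_cyclic_outcome:
  assumes N: "nae U V W"
  shows "\<not> (dec_ab U = dec_bc V \<and> dec_bc V = dec_ca W)"
proof
  assume eq: "dec_ab U = dec_bc V \<and> dec_bc V = dec_ca W"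
  define x where "x = profile3 U V W"
  have x: "x \<in> profiles n" unfolding x_def by (rule profile3_mem[OF N])
  have eqx: "H x a b = H x b c" "H x b c = H x c a"
    using eq H_profile3[OF N] unfolding x_def by simp_all
  show False
  proof (cases "H x a b")
    case True
    have bc': "H x b c" using True eqx by simp
    have "H x a c" by (rule H_trans[OF x True bc'])
    then show False using True eqx H_anti[OF x ac] by simp
  next
    case False
    then have ba: "H x b a" and cb: "H x c b" using eqx H_anti[OF x ab] H_anti[OF x bc] by auto
    have "H x c a" by (rule H_trans[OF x cb ba])
    then show False using False eqx by simp
  qed
qed

text \<open>If none of the three decisions is constant, they coincide and are odd
  (reversing every voter reverses the decision).\<close>
definition odd_neutral :: bool where
  "odd_neutral \<longleftrightarrow> (\<forall>U. dec_bc U = dec_ab U \<and> dec_ca U = dec_ab U \<and> dec_ab (neg U) = (\<not> dec_ab U))"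

lemma odd_neutral_if_nonconstant:
  assumes ab: "\<exists>U1 U0. dec_ab U1 \<and> \<not> dec_ab U0" and bc: "\<exists>U1 U0. dec_bc U1 \<and> \<not> dec_bc U0"
    and ca: "\<exists>U1 U0. dec_ca U1 \<and> \<not> dec_ca U0"
  shows odd_neutral
proof -
  have bc_neg: "dec_bc (neg U) = (\<not> dec_ab U)" for U
  proof -
    obtain W where "dec_ca W = dec_ab U" using ca by (cases "dec_ab U") auto
    then show ?thesis using no_cyclic_outcome[OF nae_neg(1)[of U W]] by auto
  qed
  have ca_neg: "dec_ca (neg V) = (\<not> dec_bc V)" for V
  proof -
    obtain U where "dec_ab U = dec_bc V" using ab by (cases "dec_bc V") auto
    then show ?thesis using no_cyclic_outcome[OF nae_neg(2)[of U V]] by auto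
  qed
  have ab_neg: "dec_ab (neg W) = (\<not> dec_ca W)" for W
  proof -
    obtain V where "dec_bc V = dec_ca W" using bc by (cases "dec_ca W") auto
    then show ?thesis using no_cyclic_outcome[OF nae_neg(3)[of W V]] by auto
  qed
  have ca_ab: "dec_ca U = dec_ab U" for U using ca_neg[of "neg U"] bc_neg[of U] by simp
  show ?thesis
    unfolding odd_neutral_def
  proof (intro allI conjI)
    fix U
    show "dec_ca U = dec_ab U" by (rule ca_ab)
    show "dec_bc U = dec_ab U" using bc_neg[of "neg U"] ab_neg[of U] ca_ab[of U] by simp
    show "dec_ab (neg U) = (\<not> dec_ab U)" using ab_neg[of U] ca_ab[of U] by simp
  qed
qed

lemma odd_neutral_closure:
  assumes odd_neutral and U: "dec_ab U" and V: "dec_ab V"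
    and W: "\<And>i. i < n \<Longrightarrow> U i = V i \<Longrightarrow> W i = U i"
  shows "dec_ab W"
proof (rule ccontr)
  assume "\<not> dec_ab W"
  moreover have "nae U V (neg W)" unfolding nae_def neg_def using W by auto
  moreover have "dec_bc V = dec_ab V" and "dec_ca (neg W) = (\<not> dec_ab W)"
    using assms(1) unfolding odd_neutral_def by auto
  ultimately show False using no_cyclic_outcome[of U V "neg W"] U V by simp
qed

text \<open>Shrinking the agreement set of two winning vectors one voter at a time
  ends with two winning vectors that agree only on a single (pivotal) voter.\<close>
lemma odd_neutral_pivot:
  assumes odd: odd_neutral and "dec_ab U" "dec_ab V"
  shows "\<exists>U' V' j. j < n \<and> dec_ab U' \<and> dec_ab V' \<and> {i. i < n \<and> U' i = V' i} = {j}"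
  using assms(2,3)
proof (induction "card {i. i < n \<and> U i = V i}" arbitrary: U V rule: less_induct)
  case less
  define D where "D = {i. i < n \<and> U i = V i}"
  have neg_ab: "dec_ab (neg W) = (\<not> dec_ab W)" for W using odd unfolding odd_neutral_def by blast
  have "D \<noteq> {}"
  proof
    assume "D = {}"
    then have "dec_ab V = dec_ab (neg U)"
      by (intro dec_ab_local) (auto simp: D_def neg_def)
    then show False using neg_ab less.prems by simp
  qed
  then obtain j where j: "j \<in> D" by blast
  show ?case
  proof (cases "D = {j}")
    case True
    then show ?thesis using j less.prems unfolding D_def by blast
  next
    case False
    define W where "W i = (if i \<in> D - {j} then U i else \<not> U i)" for i
    show ?thesis
    proof (cases "dec_ab W")
      case True
      have "{i. i < n \<and> U i = W i} = D - {j}" unfolding W_def D_def by auto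
      moreover have "card (D - {j}) < card D" using j by (intro card_Diff1_less) (auto simp: D_def)
      ultimately have "card {i. i < n \<and> U i = W i} < card {i. i < n \<and> U i = V i}"
        unfolding D_def by simp
      then show ?thesis using less.hyps less.prems(1) True by blast
    next
      case False
      then have "dec_ab (neg W)" using neg_ab by simp
      moreover have "{i. i < n \<and> V i = neg W i} = {j}"
        using j unfolding W_def D_def neg_def by auto
      ultimately show ?thesis using j less.prems(2) unfolding D_def by blast
    qed
  qed
qed

lemma odd_neutral_dictator:
  assumes odd: odd_neutral and nonconst: "\<exists>U. dec_ab U"
  shows "\<exists>j<n. \<exists>v. \<forall>W. dec_ab W = (W j = v)"
proof -
  obtain U where "dec_ab U" using nonconst by blast
  then obtain U' V' j where j: "j < n" and U': "dec_ab U'" and V': "dec_ab V'"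
    and D: "{i. i < n \<and> U' i = V' i} = {j}"
    using odd_neutral_pivot[OF odd] by blast
  have win: "dec_ab W" if W: "W j = U' j" for W
  proof (rule odd_neutral_closure[OF odd U' V'])
    fix i assume "i < n" "U' i = V' i"
    then have "i = j" using D by blast
    then show "W i = U' i" using W by simp
  qed
  have "dec_ab W = (W j = U' j)" for W
  proof (cases "W j = U' j")
    case False
    then have "dec_ab (neg W)" by (intro win) (simp add: neg_def)
    then show ?thesis using odd False unfolding odd_neutral_def by simp
  qed (simp add: win)
  then show ?thesis using j by blast
qed

lemma never_winner_if_constant:
  assumes pq: "p \<noteq> q" and const: "\<forall>x\<in>profiles n. H x p q = v"
  shows "\<exists>w. \<forall>x\<in>profiles n. \<not> winner (H x) w"
proof (cases v)
  case True
  have "\<not> winner (H x) q" if x: "x \<in> profiles n" for x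
  proof
    assume "winner (H x) q"
    then have "H x q p" using pq unfolding winner_def by simp
    then show False using H_anti[OF x pq] const x True by simp
  qed
  then show ?thesis by blast
next
  case False
  have "\<not> winner (H x) p" if x: "x \<in> profiles n" for x
  proof -
    have "\<not> H x p q" using const x False by simp
    then show ?thesis using pq unfolding winner_def by metis
  qed
  then show ?thesis by blast
qed

lemma never_winner_if_constant_dec:
  assumes "\<not> ((\<exists>U1 U0. dec_ab U1 \<and> \<not> dec_ab U0) \<and> (\<exists>U1 U0. dec_bc U1 \<and> \<not> dec_bc U0)
              \<and> (\<exists>U1 U0. dec_ca U1 \<and> \<not> dec_ca U0))"
  shows "\<exists>w. \<forall>x\<in>profiles n. \<not> winner (H x) w"
proof -
  have const: "\<forall>U. h U = h (\<lambda>_. True)" if "\<not> (\<exists>U1 U0. h U1 \<and> \<not> h U0)" for h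
    using that by blast
  from assms consider "\<not> (\<exists>U1 U0. dec_ab U1 \<and> \<not> dec_ab U0)" | "\<not> (\<exists>U1 U0. dec_bc U1 \<and> \<not> dec_bc U0)"
    | "\<not> (\<exists>U1 U0. dec_ca U1 \<and> \<not> dec_ca U0)"
    by blast
  then show ?thesis
  proof cases
    case 1
    then have "\<forall>x\<in>profiles n. H x a b = dec_ab (\<lambda>_. True)" using const H_dec(1) by metis
    then show ?thesis by (rule never_winner_if_constant[OF ab])
  next
    case 2
    then have "\<forall>x\<in>profiles n. H x b c = dec_bc (\<lambda>_. True)" using const H_dec(2) by metis
    then show ?thesis by (rule never_winner_if_constant[OF bc])
  next
    case 3
    then have "\<forall>x\<in>profiles n. H x c a = dec_ca (\<lambda>_. True)" using const H_dec(3) by metis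
    then show ?thesis by (rule never_winner_if_constant[OF ac[symmetric]])
  qed
qed

text \<open>If H x agrees with a ranking R on the three cyclic pairs, then it
  agrees with R on all pairs, so the first element of R wins.\<close>
lemma winner_if_cyclic_pairs_agree:
  assumes x: "x \<in> profiles n" and R: "linear_order R"
    and agree: "H x a b = ((a, b) \<in> R)" "H x b c = ((b, c) \<in> R)" "H x c a = ((c, a) \<in> R)"
    and first: "\<And>d. (w, d) \<in> R"
  shows "winner (H x) w"
  unfolding winner_def
proof (intro allI impI)
  fix q assume qw: "q \<noteq> w"
  have "H x p q = ((p, q) \<in> R)" if pq: "p \<noteq> q" for p q
    using exhaust[of p] exhaust[of q] pq agree H_anti[OF x ab] H_anti[OF x bc] H_anti[OF x ac]
      linear_order_swap[OF R ab] linear_order_swap[OF R bc] linear_order_swap[OF R ac]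
    by (elim disjE) simp_all
  then show "H x w q" using qw first by simp
qed

lemma dictator_or_antidictator:
  assumes odd: odd_neutral and j: "j < n" and dict: "\<And>W. dec_ab W = (W j = v)"
  shows "(\<forall>x\<in>profiles n. winner (H x) (top_alt (x j)))
       \<or> (\<forall>x\<in>profiles n. winner (H x) (bottom_alt (x j)))"
proof -
  have dec: "H x a b = ((a, b) \<in> x j = v)" "H x b c = ((b, c) \<in> x j = v)"
    "H x c a = ((c, a) \<in> x j = v)" if "x \<in> profiles n" for x
    using H_dec[OF that] dict odd unfolding odd_neutral_def by simp_all
  show ?thesis
  proof (cases v)
    case True
    have "winner (H x) (top_alt (x j))" if x: "x \<in> profiles n" for x
    proof (rule winner_if_cyclic_pairs_agree[OF x profile_linear_order[OF x j]])
      show "H x a b = ((a, b) \<in> x j)" "H x b c = ((b, c) \<in> x j)" "H x c a = ((c, a) \<in> x j)"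
        using dec[OF x] True by simp_all
      show "(top_alt (x j), d) \<in> x j" for d
        by (rule top_alt_first[OF profile_linear_order[OF x j]])
    qed
    then show ?thesis by blast
  next
    case False
    have "winner (H x) (bottom_alt (x j))" if x: "x \<in> profiles n" for x
    proof -
      have L: "linear_order (x j)" using profile_linear_order[OF x j] .
      show ?thesis
      proof (rule winner_if_cyclic_pairs_agree[OF x])
        show "linear_order ((x j)\<inverse>)" using L by simp
        show "H x a b = ((a, b) \<in> (x j)\<inverse>)" "H x b c = ((b, c) \<in> (x j)\<inverse>)"
          "H x c a = ((c, a) \<in> (x j)\<inverse>)"
          using dec[OF x] False linear_order_swap[OF L ab] linear_order_swap[OF L bc]
            linear_order_swap[OF L ac[symmetric]] by simp_all
        show "(bottom_alt (x j), d) \<in> (x j)\<inverse>" for d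
          using bottom_alt_last[OF L] by simp
      qed
    qed
    then show ?thesis by blast
  qed
qed

theorem arrow_three:
  "(\<exists>w. \<forall>x\<in>profiles n. \<not> winner (H x) w)
   \<or> (\<exists>j<n. \<forall>x\<in>profiles n. winner (H x) (top_alt (x j)))
   \<or> (\<exists>j<n. \<forall>x\<in>profiles n. winner (H x) (bottom_alt (x j)))"
proof (cases "(\<exists>U1 U0. dec_ab U1 \<and> \<not> dec_ab U0) \<and> (\<exists>U1 U0. dec_bc U1 \<and> \<not> dec_bc U0)
              \<and> (\<exists>U1 U0. dec_ca U1 \<and> \<not> dec_ca U0)")
  case True
  then have odd: odd_neutral by (elim conjE) (rule odd_neutral_if_nonconstant)
  have "\<exists>U. dec_ab U" using True by (elim conjE exE) (rule exI)
  then have "\<exists>j<n. \<exists>v. \<forall>W. dec_ab W = (W j = v)" by (rule odd_neutral_dictator[OF odd])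
  then obtain j v where j: "j < n" and dict: "\<And>W. dec_ab W = (W j = v)" by auto
  from dictator_or_antidictator[OF odd j dict] show ?thesis
  proof (elim disjE)
    assume "\<forall>x\<in>profiles n. winner (H x) (top_alt (x j))"
    then show ?thesis using j by auto
  next
    assume "\<forall>x\<in>profiles n. winner (H x) (bottom_alt (x j))"
    then show ?thesis using j by auto
  qed
next
  case False
  then show ?thesis using never_winner_if_constant_dec by simp
qed

end

context three_alternatives
begin

lemma Pr_not_winner_of_TR:
  fixes F :: "'a profile \<Rightarrow> 'a"
  assumes H: "H \<in> TR n"
    and far: "\<forall>i<n. far_from_dict n \<delta> F i \<and> far_from_antidict n \<delta> F i"
    and onto: "\<forall>w. Pr n (\<lambda>x. F x = w) \<ge> \<delta>"
  shows "\<delta> \<le> Pr n (\<lambda>x. \<not> winner (H x) (F x))"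
proof -
  interpret transitive_iia a b c n H by unfold_locales (rule H)
  have gswf: "is_gswf n H" using H unfolding TR_def by blast
  consider w where "\<forall>x\<in>profiles n. \<not> winner (H x) w"
    | j where "j < n" "\<forall>x\<in>profiles n. winner (H x) (top_alt (x j))"
    | j where "j < n" "\<forall>x\<in>profiles n. winner (H x) (bottom_alt (x j))"
    using arrow_three by blast
  then show ?thesis
  proof cases
    case (1 w)
    then have "Pr n (\<lambda>x. F x = w) \<le> Pr n (\<lambda>x. \<not> winner (H x) (F x))"
      by (intro Pr_mono) auto
    then show ?thesis using onto by (meson order_trans)
  next
    case (2 j)
    have "Pr n (\<lambda>x. F x \<noteq> top_alt (x j)) \<le> Pr n (\<lambda>x. \<not> winner (H x) (F x))"
    proof (rule Pr_mono)
      fix x assume x: "x \<in> profiles n" and "F x \<noteq> top_alt (x j)"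
      then show "\<not> winner (H x) (F x)" using winner_unique[OF gswf x] 2(2) by metis
    qed
    then show ?thesis using far 2 unfolding far_from_dict_def by (meson order_trans)
  next
    case (3 j)
    have "Pr n (\<lambda>x. F x \<noteq> bottom_alt (x j)) \<le> Pr n (\<lambda>x. \<not> winner (H x) (F x))"
    proof (rule Pr_mono)
      fix x assume x: "x \<in> profiles n" and "F x \<noteq> bottom_alt (x j)"
      then show "\<not> winner (H x) (F x)" using winner_unique[OF gswf x] 3(2) by metis
    qed
    then show ?thesis using far 3 unfolding far_from_antidict_def by (meson order_trans)
  qed
qed

end

theorem lemma4p3:
  fixes n :: nat and F :: "(nat \<Rightarrow> ('a::finite \<times> 'a) set) \<Rightarrow> 'a"
    and \<epsilon>1 \<epsilon>2 :: real
  assumes three: "card (UNIV :: 'a set) = 3"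
    and e1: "\<epsilon>1 > 0" and e2: "\<epsilon>2 > 0"
    and i: "\<forall>a b. a \<noteq> b \<longrightarrow> M n a b F \<le> \<epsilon>1"
    and ii: "\<forall>i<n. far_from_dict n \<epsilon>2 F i \<and> far_from_antidict n \<epsilon>2 F i"
    and iii: "\<forall>a. Pr n (\<lambda>x. F x = a) \<ge> \<epsilon>2"
  shows "\<exists>G :: (nat \<Rightarrow> ('a \<times> 'a) set) \<Rightarrow> 'a \<Rightarrow> 'a \<Rightarrow> bool. is_gswf n G \<and> IIA n G \<and> Dist n G \<ge> \<epsilon>2 - 3 * sqrt \<epsilon>1
             \<and> NT n G \<le> 3 * sqrt \<epsilon>1"
proof -
  obtain a b c :: 'a where "UNIV = {a, b, c}" and "a \<noteq> b" "b \<noteq> c" "a \<noteq> c"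
    using three card_3_iff by metis
  then interpret three_alternatives a b c by unfold_locales auto
  obtain t :: "'a rel" where t: "linear_order t" using linear_order_exists by blast
  define G where "G = cond_plurality t n F"
  have gswf: "is_gswf n G" unfolding G_def by (rule cond_plurality_gswf[OF t])
  have iia: "IIA n G" unfolding G_def by (rule cond_plurality_IIA)
  have loss: "Pr n (\<lambda>x. \<not> winner (G x) (F x)) \<le> 3 * sqrt \<epsilon>1"
    unfolding G_def using i by (intro Pr_cond_plurality_not_winner[OF t]) blast
  have "\<epsilon>2 - Pr n (\<lambda>x. \<not> winner (G x) (F x)) \<le> Dist n G"
    using Pr_not_winner_of_TR[OF _ ii iii] by (rule Dist_lower_bound)
  then have "\<epsilon>2 - 3 * sqrt \<epsilon>1 \<le> Dist n G" using loss by linarith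
  moreover have "NT n G \<le> 3 * sqrt \<epsilon>1"
    using NT_le_Pr_not_winner[OF gswf, of F] loss by linarith
  ultimately show ?thesis using gswf iia by blast
qed

end
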